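(* Let $X_1,\dots,X_n$ be independent real-valued random variables. Then \[E\Big[\Big|\sum_{k=1}^nX_k\Big|\wedge1\Big]\le\Big(\sum_{k=1}^nE[\tau^2(X_k)]+\Big(\sum_{k=1}^nE[\tau(X_k)]\Big)^2\Big)^{1/2}+\sum_{k=1}^nE[\tau^2(X_k)].\]
   Context: $\tau\colon\mathbb R\to\mathbb R$ is the truncation function $\tau(\alpha)=\alpha$ if $|\alpha|\le1$ and $\tau(\alpha)=\alpha/|\alpha|$ if $|\alpha|>1$. *)

theory Defs
  imports "HOL-Probability.Probability"
begin

definition trunc :: "real \<Rightarrow> real" where
  "trunc a = (if \<bar>a\<bar> \<le> 1 then a else a / \<bar>a\<bar>)"

end

theory Submission
  imports Defs
begin

text \<open>
  Pointwise, \<open>min \<bar>\<Sum>x\<^sub>k\<bar> 1 \<le> \<bar>\<Sum>\<tau>(x\<^sub>k)\<bar> + \<Sum>\<tau>\<^sup>2(x\<^sub>k)\<close>: if every \<open>\<bar>x\<^sub>k\<bar> \<le> 1\<close> then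
  \<open>\<tau>\<close> changes nothing, and otherwise some \<open>\<tau>\<^sup>2(x\<^sub>k)\<close> equals \<open>1\<close>. Taking expectations,
  \<open>E \<bar>\<Sum>\<tau>(X\<^sub>k)\<bar> \<le> (E (\<Sum>\<tau>(X\<^sub>k))\<^sup>2)\<^sup>1\<^sup>/\<^sup>2\<close> by Jensen, and by independence the second
  moment of the sum is \<open>\<Sum> Var \<tau>(X\<^sub>k) + (\<Sum> E \<tau>(X\<^sub>k))\<^sup>2\<close>, where each variance is at
  most \<open>E \<tau>\<^sup>2(X\<^sub>k)\<close>.
\<close>

lemma abs_trunc_le_1: "\<bar>trunc a\<bar> \<le> 1"
  by (auto simp: trunc_def abs_div)

lemma trunc_eq_self: "\<bar>a\<bar> \<le> 1 \<Longrightarrow> trunc a = a"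
  by (simp add: trunc_def)

lemma trunc_square_eq_1: "1 < \<bar>a\<bar> \<Longrightarrow> (trunc a)\<^sup>2 = 1"
  by (auto simp: trunc_def power_divide)

lemma borel_measurable_trunc [measurable]: "trunc \<in> borel_measurable borel"
  unfolding trunc_def by measurable

lemma min_abs_sum_le_abs_sum_trunc_plus_sum_trunc_square:
  fixes x :: "'i \<Rightarrow> real"
  assumes "finite I"
  shows "min \<bar>\<Sum>k\<in>I. x k\<bar> 1 \<le> \<bar>\<Sum>k\<in>I. trunc (x k)\<bar> + (\<Sum>k\<in>I. (trunc (x k))\<^sup>2)"
proof (cases "\<forall>k\<in>I. \<bar>x k\<bar> \<le> 1")
  case True
  then have "(\<Sum>k\<in>I. trunc (x k)) = (\<Sum>k\<in>I. x k)"
    by (intro sum.cong refl trunc_eq_self) auto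
  moreover have "0 \<le> (\<Sum>k\<in>I. (trunc (x k))\<^sup>2)"
    by (intro sum_nonneg zero_le_power2)
  ultimately show ?thesis
    by simp
next
  case False
  then obtain j where "j \<in> I" "1 < \<bar>x j\<bar>"
    by auto
  then have "(trunc (x j))\<^sup>2 \<le> (\<Sum>k\<in>I. (trunc (x k))\<^sup>2)"
    using assms by (intro member_le_sum zero_le_power2)
  then have "1 \<le> (\<Sum>k\<in>I. (trunc (x k))\<^sup>2)"
    using trunc_square_eq_1[OF \<open>1 < \<bar>x j\<bar>\<close>] by simp
  then show ?thesis
    by linarith
qed

context prob_space
begin

lemma variance_le_second_moment:
  fixes Z :: "'a \<Rightarrow> real"
  assumes "integrable M Z" "integrable M (\<lambda>x. (Z x)\<^sup>2)"
  shows "variance Z \<le> expectation (\<lambda>x. (Z x)\<^sup>2)"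
  using variance_eq[OF assms] zero_le_power2[of "expectation Z"] by linarith

lemma square_expectation_le_second_moment:
  fixes Z :: "'a \<Rightarrow> real"
  assumes "integrable M Z" "integrable M (\<lambda>x. (Z x)\<^sup>2)"
  shows "(expectation Z)\<^sup>2 \<le> expectation (\<lambda>x. (Z x)\<^sup>2)"
  using variance_eq[OF assms] variance_positive[of Z] by linarith

lemma expectation_abs_le_sqrt_second_moment:
  fixes Z :: "'a \<Rightarrow> real"
  assumes "Z \<in> borel_measurable M" "integrable M (\<lambda>x. (Z x)\<^sup>2)"
  shows "expectation (\<lambda>x. \<bar>Z x\<bar>) \<le> sqrt (expectation (\<lambda>x. (Z x)\<^sup>2))"
proof -
  have "integrable M Z"
    using assms by (rule square_integrable_imp_integrable)
  then have "(expectation (\<lambda>x. \<bar>Z x\<bar>))\<^sup>2 \<le> expectation (\<lambda>x. \<bar>Z x\<bar>\<^sup>2)"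
    using assms(2) by (intro square_expectation_le_second_moment integrable_abs) simp_all
  then show ?thesis
    by (simp add: real_le_rsqrt)
qed

lemma indep_vars_square_integrable_imp_integrable:
  fixes Y :: "'i \<Rightarrow> 'a \<Rightarrow> real"
  assumes "indep_vars (\<lambda>_. borel) Y I" "k \<in> I" "integrable M (\<lambda>x. (Y k x)\<^sup>2)"
  shows "integrable M (Y k)"
proof (rule square_integrable_imp_integrable)
  show "Y k \<in> borel_measurable M"
    using assms(1,2) by (simp add: indep_vars_def)
qed (use assms(3) in simp)

lemma indep_vars_integrable_mult:
  fixes Y :: "'i \<Rightarrow> 'a \<Rightarrow> real"
  assumes "indep_vars (\<lambda>_. borel) Y I" "j \<in> I" "k \<in> I"
    and "\<And>k. k \<in> I \<Longrightarrow> integrable M (\<lambda>x. (Y k x)\<^sup>2)"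
  shows "integrable M (\<lambda>x. Y j x * Y k x)"
    and "expectation (\<lambda>x. Y j x * Y k x)
      = (if j = k then variance (Y k) else 0) + expectation (Y j) * expectation (Y k)"
proof -
  have integrable: "integrable M (Y i)" if "i \<in> I" for i
    using assms(1) that assms(4)[OF that] by (rule indep_vars_square_integrable_imp_integrable)
  have "integrable M (\<lambda>x. Y j x * Y k x)
    \<and> expectation (\<lambda>x. Y j x * Y k x)
      = (if j = k then variance (Y k) else 0) + expectation (Y j) * expectation (Y k)"
  proof (cases "j = k")
    case True
    have "variance (Y k) = expectation (\<lambda>x. (Y k x)\<^sup>2) - (expectation (Y k))\<^sup>2"
      using assms(3,4) integrable by (intro variance_eq) auto
    with True assms(3,4) show ?thesis
      by (simp add: power2_eq_square)
  next
    case False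
    have indep: "indep_vars (\<lambda>_. borel) Y {j, k}"
      using assms(2,3) by (intro indep_vars_subset[OF assms(1)]) auto
    have integrable_jk: "\<And>i. i \<in> {j, k} \<Longrightarrow> integrable M (Y i)"
      using assms(2,3) integrable by auto
    have "integrable M (\<lambda>x. \<Prod>i\<in>{j, k}. Y i x)"
      using indep integrable_jk by (intro indep_vars_integrable) auto
    moreover have "expectation (\<lambda>x. \<Prod>i\<in>{j, k}. Y i x) = (\<Prod>i\<in>{j, k}. expectation (Y i))"
      using indep integrable_jk by (intro indep_vars_lebesgue_integral) auto
    ultimately show ?thesis
      using False by simp
  qed
  then show "integrable M (\<lambda>x. Y j x * Y k x)"
    and "expectation (\<lambda>x. Y j x * Y k x)
      = (if j = k then variance (Y k) else 0) + expectation (Y j) * expectation (Y k)"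
    by auto
qed

lemma second_moment_sum_indep:
  fixes Y :: "'i \<Rightarrow> 'a \<Rightarrow> real"
  assumes "finite I" "indep_vars (\<lambda>_. borel) Y I"
    and "\<And>k. k \<in> I \<Longrightarrow> integrable M (\<lambda>x. (Y k x)\<^sup>2)"
  shows "expectation (\<lambda>x. (\<Sum>k\<in>I. Y k x)\<^sup>2)
    = (\<Sum>k\<in>I. variance (Y k)) + (\<Sum>k\<in>I. expectation (Y k))\<^sup>2"
proof -
  note product = indep_vars_integrable_mult[OF assms(2) _ _ assms(3)]
  have "expectation (\<lambda>x. (\<Sum>k\<in>I. Y k x)\<^sup>2)
      = expectation (\<lambda>x. \<Sum>j\<in>I. \<Sum>k\<in>I. Y j x * Y k x)"
    by (simp add: power2_eq_square sum_product)
  also have "\<dots> = (\<Sum>j\<in>I. \<Sum>k\<in>I. expectation (\<lambda>x. Y j x * Y k x))"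
    using product(1)
    by (simp add: Bochner_Integration.integral_sum Bochner_Integration.integrable_sum)
  also have "\<dots> = (\<Sum>j\<in>I. \<Sum>k\<in>I.
      (if j = k then variance (Y k) else 0) + expectation (Y j) * expectation (Y k))"
    using product(2) by simp
  also have "\<dots> = (\<Sum>k\<in>I. variance (Y k)) + (\<Sum>k\<in>I. expectation (Y k))\<^sup>2"
    using assms(1) by (simp add: sum.distrib power2_eq_square sum_product)
  finally show ?thesis .
qed

lemma expectation_abs_sum_indep_le:
  fixes Y :: "'i \<Rightarrow> 'a \<Rightarrow> real"
  assumes "finite I" "indep_vars (\<lambda>_. borel) Y I"
    and "\<And>k. k \<in> I \<Longrightarrow> integrable M (\<lambda>x. (Y k x)\<^sup>2)"
  shows "expectation (\<lambda>x. \<bar>\<Sum>k\<in>I. Y k x\<bar>)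
    \<le> sqrt ((\<Sum>k\<in>I. expectation (\<lambda>x. (Y k x)\<^sup>2)) + (\<Sum>k\<in>I. expectation (Y k))\<^sup>2)"
proof -
  have "integrable M (\<lambda>x. \<Sum>j\<in>I. \<Sum>k\<in>I. Y j x * Y k x)"
    using indep_vars_integrable_mult(1)[OF assms(2) _ _ assms(3)] by simp
  then have "integrable M (\<lambda>x. (\<Sum>k\<in>I. Y k x)\<^sup>2)"
    by (simp add: power2_eq_square sum_product)
  moreover have "(\<lambda>x. \<Sum>k\<in>I. Y k x) \<in> borel_measurable M"
    using assms(2) by (intro borel_measurable_sum) (simp add: indep_vars_def)
  ultimately have "expectation (\<lambda>x. \<bar>\<Sum>k\<in>I. Y k x\<bar>)
      \<le> sqrt (expectation (\<lambda>x. (\<Sum>k\<in>I. Y k x)\<^sup>2))"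
    by (intro expectation_abs_le_sqrt_second_moment)
  also have "\<dots> = sqrt ((\<Sum>k\<in>I. variance (Y k)) + (\<Sum>k\<in>I. expectation (Y k))\<^sup>2)"
    using second_moment_sum_indep[OF assms] by simp
  also have "\<dots> \<le> sqrt ((\<Sum>k\<in>I. expectation (\<lambda>x. (Y k x)\<^sup>2)) + (\<Sum>k\<in>I. expectation (Y k))\<^sup>2)"
  proof -
    have "variance (Y k) \<le> expectation (\<lambda>x. (Y k x)\<^sup>2)" if "k \<in> I" for k
      using that assms(3)
      by (intro variance_le_second_moment indep_vars_square_integrable_imp_integrable[OF assms(2)])
    then show ?thesis
      by (intro real_sqrt_le_mono add_mono sum_mono) auto
  qed
  finally show ?thesis .
qed

lemma integrable_trunc:
  "X \<in> borel_measurable M \<Longrightarrow> integrable M (\<lambda>\<omega>. trunc (X \<omega>))"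
  by (intro integrable_const_bound[where B=1] AE_I2) (simp_all add: abs_trunc_le_1)

lemma integrable_trunc_square:
  "X \<in> borel_measurable M \<Longrightarrow> integrable M (\<lambda>\<omega>. (trunc (X \<omega>))\<^sup>2)"
  by (intro integrable_const_bound[where B=1] AE_I2) (simp_all add: abs_trunc_le_1 abs_square_le_1)

lemma expectation_min_abs_sum_le_trunc:
  fixes X :: "'i \<Rightarrow> 'a \<Rightarrow> real"
  assumes "finite I" "\<And>k. k \<in> I \<Longrightarrow> X k \<in> borel_measurable M"
  shows "expectation (\<lambda>\<omega>. min \<bar>\<Sum>k\<in>I. X k \<omega>\<bar> 1)
    \<le> expectation (\<lambda>\<omega>. \<bar>\<Sum>k\<in>I. trunc (X k \<omega>)\<bar>)
      + (\<Sum>k\<in>I. expectation (\<lambda>\<omega>. (trunc (X k \<omega>))\<^sup>2))"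
proof -
  have abs_sum_integrable: "integrable M (\<lambda>\<omega>. \<bar>\<Sum>k\<in>I. trunc (X k \<omega>)\<bar>)"
    using assms(2) by (intro integrable_abs Bochner_Integration.integrable_sum integrable_trunc)
  have square_integrable: "integrable M (\<lambda>\<omega>. (trunc (X k \<omega>))\<^sup>2)" if "k \<in> I" for k
    using assms(2)[OF that] by (rule integrable_trunc_square)
  have "integrable M (\<lambda>\<omega>. min \<bar>\<Sum>k\<in>I. X k \<omega>\<bar> 1)"
    using assms(2) by (intro integrable_const_bound[where B=1]) auto
  then have "expectation (\<lambda>\<omega>. min \<bar>\<Sum>k\<in>I. X k \<omega>\<bar> 1)
      \<le> expectation (\<lambda>\<omega>. \<bar>\<Sum>k\<in>I. trunc (X k \<omega>)\<bar> + (\<Sum>k\<in>I. (trunc (X k \<omega>))\<^sup>2))"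
    using assms(1) abs_sum_integrable square_integrable
    by (intro integral_mono Bochner_Integration.integrable_add Bochner_Integration.integrable_sum
        min_abs_sum_le_abs_sum_trunc_plus_sum_trunc_square)
  also have "\<dots> = expectation (\<lambda>\<omega>. \<bar>\<Sum>k\<in>I. trunc (X k \<omega>)\<bar>)
      + (\<Sum>k\<in>I. expectation (\<lambda>\<omega>. (trunc (X k \<omega>))\<^sup>2))"
    using abs_sum_integrable square_integrable
    by (simp only: Bochner_Integration.integral_add Bochner_Integration.integrable_sum
        Bochner_Integration.integral_sum)
  finally show ?thesis .
qed

end

theorem lemma3p10:
  fixes M :: "'a measure" and X :: "nat \<Rightarrow> 'a \<Rightarrow> real" and n :: nat
  assumes "prob_space M"
    and "\<And>k. k \<in> {1..n} \<Longrightarrow> X k \<in> borel_measurable M"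
    and "prob_space.indep_vars M (\<lambda>_. borel) X {1..n}"
  shows "prob_space.expectation M (\<lambda>\<omega>. min \<bar>\<Sum>k=1..n. X k \<omega>\<bar> 1)
    \<le> sqrt ((\<Sum>k=1..n. prob_space.expectation M (\<lambda>\<omega>. (trunc (X k \<omega>))\<^sup>2))
             + (\<Sum>k=1..n. prob_space.expectation M (\<lambda>\<omega>. trunc (X k \<omega>)))\<^sup>2)
      + (\<Sum>k=1..n. prob_space.expectation M (\<lambda>\<omega>. (trunc (X k \<omega>))\<^sup>2))"
proof -
  interpret prob_space M by fact
  have "indep_vars (\<lambda>_. borel) (\<lambda>k \<omega>. trunc (X k \<omega>)) {1..n}"
    using assms(3) by (rule indep_vars_compose2) simp
  then have "expectation (\<lambda>\<omega>. \<bar>\<Sum>k=1..n. trunc (X k \<omega>)\<bar>)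
      \<le> sqrt ((\<Sum>k=1..n. expectation (\<lambda>\<omega>. (trunc (X k \<omega>))\<^sup>2))
             + (\<Sum>k=1..n. expectation (\<lambda>\<omega>. trunc (X k \<omega>)))\<^sup>2)"
    using assms(2) by (intro expectation_abs_sum_indep_le integrable_trunc_square) auto
  moreover have "expectation (\<lambda>\<omega>. min \<bar>\<Sum>k=1..n. X k \<omega>\<bar> 1)
      \<le> expectation (\<lambda>\<omega>. \<bar>\<Sum>k=1..n. trunc (X k \<omega>)\<bar>)
        + (\<Sum>k=1..n. expectation (\<lambda>\<omega>. (trunc (X k \<omega>))\<^sup>2))"
    using assms(2) by (intro expectation_min_abs_sum_le_trunc) auto
  ultimately show ?thesis
    by linarith
qed

end
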